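(* Let $G$ be an abelian group with identity $\varepsilon$ and $R$ a commutative ring with identity. Then $\phi=(\phi_g,Y_g,Y_\varepsilon)_{g\in G}$ is a partial action of $G$ on $Y_\varepsilon$, the isomorphism $\Psi$ (with $\Psi(P_E)=Q_E$) satisfies $\phi_g\circ\Psi=\Psi\circ\alpha_g$ on $D_{g^{-1}}$ for all $g\in G$, and consequently there is an isomorphism of algebras $$P(G)=A_\varepsilon\rtimes_\alpha G\ \cong\ C_R(Y_\varepsilon)\rtimes_\phi G.$$
   Context: $A$ is the commutative $R$-algebra generated by symbols $P_E$ ($E$ finite subsets of $G$) subject to $P_EP_F=P_{E\cup F}$, with identity $P_\emptyset$; $A_\varepsilon=P_{\{\varepsilon\}}A=\operatorname{span}\{P_E:\varepsilon\in E\}$; $D_g=\operatorname{span}_R\{P_E:\varepsilon,g\in E\}$ (an ideal of $A_\varepsilon$); $\alpha_g:D_{g^{-1}}\to D_g$, $\alpha_g(P_E)=P_{gE}$, giving a partial action $\alpha=(\alpha_g,D_g,A_\varepsilon)$ of $G$ on $A_\varepsilon$. $Y=\prod_{g\in G}\{0,1\}$ with product topology, $Y_\varepsilon=\{x:x_\varepsilon=1\}$, $Y_g=\{x\in Y_\varepsilon: x_g=1\}$, $\phi_g:Y_{g^{-1}}\to Y_g$, $\phi_g((x_h)_h)=(x_{g^{-1}h})_h$; the induced action on functions is $\phi_g(f)=f\circ\phi_{g^{-1}}$ from $C_R(Y_{g^{-1}})$ to $C_R(Y_g)$ ($C_R(\cdot)$: locally constant compactly supported $R$-valued functions). $Q_E=\prod_{g\in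 E}Q_g$ with $Q_g(x)=x_g$, and $\Psi:A\to C_R(Y)$, $P_E\mapsto Q_E$. A partial action of a group on a space/algebra: sets/ideals $X_g$, bijections/isomorphisms $\phi_g:X_{g^{-1}}\to X_g$ with $X_\varepsilon=X$, $\phi_\varepsilon=\operatorname{id}$, $\phi_g(X_{g^{-1}}\cap X_h)=X_g\cap X_{gh}$, $\phi_g\phi_h=\phi_{gh}$ on $X_{h^{-1}}\cap X_{h^{-1}g^{-1}}$. For a partial action $(\beta_g,B_g,B)$ on an algebra, $B\rtimes_\beta G$ is the set of finite sums $\sum b_g\delta_g$, $b_g\in B_g$, with $(b_g\delta_g)(c_h\delta_h)=\beta_g(\beta_{g^{-1}}(b_g)c_h)\delta_{gh}$. *)

theory Defs
  imports "HOL-Analysis.Analysis"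
begin

text \<open>Conventions. The abelian group G is a type of class ab_group_add, written additively
  (identity 0 = epsilon, inverse uminus, product g h = g + h). R is a type of class comm_ring_1.\<close>

text \<open>A is the semilattice algebra R[(finite subsets of G, union)]: elements are finitely supported
  functions from finite subsets of G to R; P_E is the indicator of E; the product is the
  R-bilinear extension of P_E P_F = P_(E union F).\<close>

definition A_supp :: "('g set \<Rightarrow> 'r::zero) \<Rightarrow> 'g set set" where
  "A_supp a = {E. a E \<noteq> 0}"

definition A_carrier :: "('g set \<Rightarrow> 'r::comm_ring_1) set" where
  "A_carrier = {a. finite (A_supp a) \<and> (\<forall>E \<in> A_supp a. finite E)}"

definition P :: "'g set \<Rightarrow> ('g set \<Rightarrow> 'r::comm_ring_1)" where
  "P E = (\<lambda>F. if F = E then 1 else 0)"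

definition A_mult :: "('g set \<Rightarrow> 'r::comm_ring_1) \<Rightarrow> ('g set \<Rightarrow> 'r) \<Rightarrow> ('g set \<Rightarrow> 'r)" where
  "A_mult a b = (\<lambda>H. \<Sum>(E, F) \<in> {(E, F). E \<in> A_supp a \<and> F \<in> A_supp b \<and> E \<union> F = H}. a E * b F)"

text \<open>A_eps = P_{eps} A = span{P_E : eps in E}\<close>
definition A_eps :: "('g::ab_group_add set \<Rightarrow> 'r::comm_ring_1) set" where
  "A_eps = {a \<in> A_carrier. \<forall>E \<in> A_supp a. 0 \<in> E}"

definition D :: "'g::ab_group_add \<Rightarrow> ('g set \<Rightarrow> 'r::comm_ring_1) set" where
  "D g = {a \<in> A_carrier. \<forall>E \<in> A_supp a. 0 \<in> E \<and> g \<in> E}"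

text \<open>alpha_g (P_E) = P_(gE), extended linearly\<close>
definition alpha :: "'g::ab_group_add \<Rightarrow> ('g set \<Rightarrow> 'r::comm_ring_1) \<Rightarrow> ('g set \<Rightarrow> 'r)" where
  "alpha g a = (\<lambda>F. a ((\<lambda>h. - g + h) ` F))"

text \<open>Y is the type 'g \<Rightarrow> bool with the product topology (bool carries the discrete topology).\<close>

definition Y_eps :: "('g::ab_group_add \<Rightarrow> bool) set" where
  "Y_eps = {x. x 0}"

definition Yg :: "'g::ab_group_add \<Rightarrow> ('g \<Rightarrow> bool) set" where
  "Yg g = {x \<in> Y_eps. x g}"

definition phi :: "'g::ab_group_add \<Rightarrow> ('g \<Rightarrow> bool) \<Rightarrow> ('g \<Rightarrow> bool)" where
  "phi g x = (\<lambda>h. x (- g + h))"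

definition is_partial_action ::
  "'a set \<Rightarrow> ('g::ab_group_add \<Rightarrow> 'a set) \<Rightarrow> ('g \<Rightarrow> 'a \<Rightarrow> 'a) \<Rightarrow> bool" where
  "is_partial_action X XX f \<longleftrightarrow>
     (\<forall>g. XX g \<subseteq> X) \<and>
     (\<forall>g. bij_betw (f g) (XX (- g)) (XX g)) \<and>
     XX 0 = X \<and>
     (\<forall>x \<in> X. f 0 x = x) \<and>
     (\<forall>g h. f g ` (XX (- g) \<inter> XX h) = XX g \<inter> XX (g + h)) \<and>
     (\<forall>g h. \<forall>x \<in> XX (- h) \<inter> XX (- h + - g). f g (f h x) = f (g + h) x)"

text \<open>C_R(X) for X a subset of Y: functions on X (represented as functions on Y vanishing
  outside X) that are locally constant on X (subspace topology) and have compact support in X.\<close>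
definition C_R :: "('g \<Rightarrow> bool) set \<Rightarrow> (('g \<Rightarrow> bool) \<Rightarrow> 'r::comm_ring_1) set" where
  "C_R X = {f. (\<forall>x. x \<notin> X \<longrightarrow> f x = 0) \<and>
              (\<forall>x \<in> X. \<exists>U. open U \<and> x \<in> U \<and> (\<forall>y \<in> U \<inter> X. f y = f x)) \<and>
              (\<exists>K. compact K \<and> K \<subseteq> X \<and> {x \<in> X. f x \<noteq> 0} \<subseteq> K)}"

definition phi_fun :: "'g::ab_group_add \<Rightarrow> (('g \<Rightarrow> bool) \<Rightarrow> 'r::comm_ring_1) \<Rightarrow> (('g \<Rightarrow> bool) \<Rightarrow> 'r)" where
  "phi_fun g f = (\<lambda>x. if x \<in> Yg g then f (phi (- g) x) else 0)"

definition fun_mult :: "(('g \<Rightarrow> bool) \<Rightarrow> 'r::comm_ring_1) \<Rightarrow> (('g \<Rightarrow> bool) \<Rightarrow> 'r) \<Rightarrow> (('g \<Rightarrow> bool) \<Rightarrow> 'r)" where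
  "fun_mult f h = (\<lambda>x. f x * h x)"

definition Q :: "'g set \<Rightarrow> (('g \<Rightarrow> bool) \<Rightarrow> 'r::comm_ring_1)" where
  "Q E = (\<lambda>x. \<Prod>h \<in> E. if x h then 1 else 0)"

definition Psi :: "('g set \<Rightarrow> 'r::comm_ring_1) \<Rightarrow> (('g \<Rightarrow> bool) \<Rightarrow> 'r)" where
  "Psi a = (\<lambda>x. \<Sum>E \<in> A_supp a. a E * Q E x)"

text \<open>For a partial action (beta_g, B_g, B) on an algebra of R-valued functions on a set,
  B \<rtimes>_beta G is the set of finite formal sums sum_g b_g delta_g with b_g in B_g, represented
  as finitely supported maps g \<mapsto> b_g. Addition and R-scalar multiplication are componentwise;
  (b_g delta_g)(c_h delta_h) = beta_g(beta_{g^-1}(b_g) c_h) delta_{gh}.\<close>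

definition cp_carrier :: "('g \<Rightarrow> ('x \<Rightarrow> 'r::comm_ring_1) set) \<Rightarrow> ('g \<Rightarrow> ('x \<Rightarrow> 'r)) set" where
  "cp_carrier B = {u. finite {g. u g \<noteq> (\<lambda>_. 0)} \<and> (\<forall>g. u g \<in> B g)}"

definition cp_add :: "('g \<Rightarrow> ('x \<Rightarrow> 'r::comm_ring_1)) \<Rightarrow> ('g \<Rightarrow> ('x \<Rightarrow> 'r)) \<Rightarrow> ('g \<Rightarrow> ('x \<Rightarrow> 'r))" where
  "cp_add u v = (\<lambda>g x. u g x + v g x)"

definition cp_smul :: "'r::comm_ring_1 \<Rightarrow> ('g \<Rightarrow> ('x \<Rightarrow> 'r)) \<Rightarrow> ('g \<Rightarrow> ('x \<Rightarrow> 'r))" where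
  "cp_smul r u = (\<lambda>g x. r * u g x)"

definition cp_mult ::
  "(('x \<Rightarrow> 'r::comm_ring_1) \<Rightarrow> ('x \<Rightarrow> 'r) \<Rightarrow> ('x \<Rightarrow> 'r)) \<Rightarrow> ('g::ab_group_add \<Rightarrow> ('x \<Rightarrow> 'r) \<Rightarrow> ('x \<Rightarrow> 'r))
   \<Rightarrow> ('g \<Rightarrow> ('x \<Rightarrow> 'r)) \<Rightarrow> ('g \<Rightarrow> ('x \<Rightarrow> 'r)) \<Rightarrow> ('g \<Rightarrow> ('x \<Rightarrow> 'r))" where
  "cp_mult mul beta u v =
     (\<lambda>k x. \<Sum>g \<in> {g. u g \<noteq> (\<lambda>_. 0)}. beta g (mul (beta (- g) (u g)) (v (- g + k))) x)"

definition cp_algebra_iso ::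
  "('g \<Rightarrow> ('x \<Rightarrow> 'r::comm_ring_1)) set \<Rightarrow> (('g \<Rightarrow> ('x \<Rightarrow> 'r)) \<Rightarrow> ('g \<Rightarrow> ('x \<Rightarrow> 'r)) \<Rightarrow> ('g \<Rightarrow> ('x \<Rightarrow> 'r)))
   \<Rightarrow> ('g \<Rightarrow> ('y \<Rightarrow> 'r)) set \<Rightarrow> (('g \<Rightarrow> ('y \<Rightarrow> 'r)) \<Rightarrow> ('g \<Rightarrow> ('y \<Rightarrow> 'r)) \<Rightarrow> ('g \<Rightarrow> ('y \<Rightarrow> 'r)))
   \<Rightarrow> (('g \<Rightarrow> ('x \<Rightarrow> 'r)) \<Rightarrow> ('g \<Rightarrow> ('y \<Rightarrow> 'r))) \<Rightarrow> bool" where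
  "cp_algebra_iso C1 m1 C2 m2 f \<longleftrightarrow>
     bij_betw f C1 C2 \<and>
     (\<forall>u \<in> C1. \<forall>v \<in> C1. f (cp_add u v) = cp_add (f u) (f v)) \<and>
     (\<forall>u \<in> C1. \<forall>v \<in> C1. f (m1 u v) = m2 (f u) (f v)) \<and>
     (\<forall>r. \<forall>u \<in> C1. f (cp_smul r u) = cp_smul r (f u))"

end

theory Submission
  imports Defs
begin

text \<open>Psi is injective on A: evaluated at the indicator of a minimal set E of the support of a,
  Psi a picks out the single coefficient a E. It is multiplicative because Q (E \<union> F) = Q E * Q F,
  and it intertwines alpha g with phi g because translating E by g shifts the coordinates of Y.
  Conversely, a locally constant function with compact support depends on finitely many
  coordinates only, and such a function is a polynomial in the coordinate functions Q {h};
  so Psi maps D g onto C_R (Y g). Applied componentwise, Psi is therefore an isomorphism of the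
  crossed products.\<close>

lemma Q_finite: "finite E \<Longrightarrow> Q E x = (if \<forall>h\<in>E. x h then 1 else 0)"
  unfolding Q_def by (induction E rule: finite_induct) auto

lemma Q_union: "finite E \<Longrightarrow> finite F \<Longrightarrow> Q (E \<union> F) x = Q E x * Q F x"
  by (auto simp: Q_finite)

lemma Psi_superset: "finite S \<Longrightarrow> A_supp a \<subseteq> S \<Longrightarrow> Psi a x = (\<Sum>E\<in>S. a E * Q E x)"
  unfolding Psi_def by (rule sum.mono_neutral_left) (auto simp: A_supp_def)

lemma Psi_P: "Psi (P E) x = Q E x"
proof -
  have "A_supp (P E) \<subseteq> {E}" by (auto simp: A_supp_def P_def)
  from Psi_superset[OF _ this] show ?thesis by (simp add: P_def)
qed

lemma Psi_zero: "Psi (\<lambda>_. 0) = (\<lambda>_. 0)"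
  by (simp add: Psi_def A_supp_def fun_eq_iff)

lemma Psi_sum:
  assumes "finite I" and "\<And>i. i \<in> I \<Longrightarrow> finite (A_supp (b i))"
  shows "Psi (\<lambda>E. \<Sum>i\<in>I. b i E) x = (\<Sum>i\<in>I. Psi (b i) x)"
proof -
  let ?S = "\<Union>i\<in>I. A_supp (b i)"
  have fS: "finite ?S" using assms by blast
  have "A_supp (\<lambda>E. \<Sum>i\<in>I. b i E) \<subseteq> ?S"
    by (auto simp: A_supp_def intro: ccontr)
  then have "Psi (\<lambda>E. \<Sum>i\<in>I. b i E) x = (\<Sum>E\<in>?S. \<Sum>i\<in>I. b i E * Q E x)"
    by (simp add: Psi_superset[OF fS] sum_distrib_right)
  also have "\<dots> = (\<Sum>i\<in>I. \<Sum>E\<in>?S. b i E * Q E x)"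
    by (rule sum.swap)
  also have "\<dots> = (\<Sum>i\<in>I. Psi (b i) x)"
    using fS by (intro sum.cong refl Psi_superset[symmetric]) auto
  finally show ?thesis .
qed

lemma Psi_add:
  "finite (A_supp a) \<Longrightarrow> finite (A_supp b) \<Longrightarrow> Psi (\<lambda>E. a E + b E) x = Psi a x + Psi b x"
  using Psi_sum[of "{True, False}" "\<lambda>i. if i then a else b" x] by simp

lemma Psi_smul:
  assumes "finite (A_supp a)" shows "Psi (\<lambda>E. r * a E) x = r * Psi a x"
proof -
  have "A_supp (\<lambda>E. r * a E) \<subseteq> A_supp a" by (auto simp: A_supp_def)
  from Psi_superset[OF assms this] show ?thesis
    by (simp add: Psi_def sum_distrib_left mult.assoc)
qed

lemma Psi_diff:
  "finite (A_supp a) \<Longrightarrow> finite (A_supp b) \<Longrightarrow> Psi (\<lambda>E. a E - b E) x = Psi a x - Psi b x"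
  using Psi_add[of a "\<lambda>E. - 1 * b E" x] Psi_smul[of b "- 1" x]
  by (simp add: A_supp_def)

lemma A_carrier_pointwise:
  assumes "a \<in> A_carrier" "b \<in> A_carrier" "f 0 0 = 0"
  shows "(\<lambda>E. f (a E) (b E)) \<in> A_carrier"
proof -
  have "A_supp (\<lambda>E. f (a E) (b E)) \<subseteq> A_supp a \<union> A_supp b"
    using assms(3) by (auto simp: A_supp_def)
  with assms(1,2) show ?thesis
    by (auto simp: A_carrier_def intro: finite_subset)
qed

lemma A_supp_A_mult:
  assumes "H \<in> A_supp (A_mult a b)" shows "\<exists>E\<in>A_supp a. \<exists>F\<in>A_supp b. H = E \<union> F"
proof (rule ccontr)
  assume "\<not> ?thesis"
  then have "{(E, F). E \<in> A_supp a \<and> F \<in> A_supp b \<and> E \<union> F = H} = {}" by auto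
  then have "A_mult a b H = 0" unfolding A_mult_def by (simp only: sum.empty)
  with assms show False by (simp add: A_supp_def)
qed

lemma A_mult_carrier:
  assumes "a \<in> A_carrier" "b \<in> A_carrier" shows "A_mult a b \<in> A_carrier"
proof -
  have "A_supp (A_mult a b) \<subseteq> (\<lambda>(E, F). E \<union> F) ` (A_supp a \<times> A_supp b)"
    by (auto dest!: A_supp_A_mult)
  moreover have "finite H" if "H \<in> A_supp (A_mult a b)" for H
    using A_supp_A_mult[OF that] assms by (auto simp: A_carrier_def)
  ultimately show ?thesis
    using assms by (simp add: A_carrier_def finite_subset)
qed

lemma Psi_A_mult:
  assumes a: "a \<in> A_carrier" and b: "b \<in> A_carrier"
  shows "Psi (A_mult a b) x = Psi a x * Psi b x"
proof -
  let ?Sa = "A_supp a" and ?Sb = "A_supp b"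
  let ?u = "\<lambda>p. fst p \<union> snd p"
  let ?U = "?u ` (?Sa \<times> ?Sb)"
  have fa: "finite ?Sa" and fb: "finite ?Sb" using a b by (auto simp: A_carrier_def)
  have sub: "A_supp (A_mult a b) \<subseteq> ?U"
    by (force dest!: A_supp_A_mult)
  have fibre: "{(E, F). E \<in> ?Sa \<and> F \<in> ?Sb \<and> E \<union> F = H} = {p \<in> ?Sa \<times> ?Sb. ?u p = H}" for H
    by auto
  have "Psi (A_mult a b) x = (\<Sum>H\<in>?U. A_mult a b H * Q H x)"
    using fa fb by (intro Psi_superset sub) auto
  also have "\<dots> = (\<Sum>H\<in>?U. \<Sum>p\<in>{p \<in> ?Sa \<times> ?Sb. ?u p = H}. a (fst p) * b (snd p) * Q (?u p) x)"
    unfolding A_mult_def fibre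
    by (intro sum.cong refl) (simp add: sum_distrib_right case_prod_beta)
  also have "\<dots> = (\<Sum>p\<in>?Sa \<times> ?Sb. a (fst p) * b (snd p) * Q (?u p) x)"
    by (rule sum.group) (use fa fb in auto)
  also have "\<dots> = (\<Sum>p\<in>?Sa \<times> ?Sb. (a (fst p) * Q (fst p) x) * (b (snd p) * Q (snd p) x))"
    using a b by (intro sum.cong refl) (auto simp: A_carrier_def Q_union mult_ac)
  also have "\<dots> = Psi a x * Psi b x"
    unfolding Psi_def sum_product sum.cartesian_product by (simp add: case_prod_beta)
  finally show ?thesis .
qed

lemma A_mult_D:
  assumes "a \<in> D g" "b \<in> A_carrier" shows "A_mult a b \<in> D g"
  using assms A_mult_carrier[of a b] by (auto simp: D_def dest!: A_supp_A_mult)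

lemma Psi_outside_Yg:
  assumes "a \<in> D g" "x \<notin> Yg g" shows "Psi a x = 0"
  unfolding Psi_def
proof (rule sum.neutral, rule ballI)
  fix E assume "E \<in> A_supp a"
  with assms have "finite E" "\<not> (\<forall>h\<in>E. x h)"
    by (auto simp: D_def A_carrier_def Yg_def Y_eps_def)
  then show "a E * Q E x = 0" by (auto simp: Q_finite)
qed

text \<open>At the indicator of a minimal set of the support only that set contributes to the sum.\<close>
lemma Psi_eq_zero_imp:
  assumes c: "a \<in> A_carrier" and z: "Psi a = (\<lambda>_. 0)"
  shows "a = (\<lambda>_. 0)"
proof (rule ccontr)
  assume "a \<noteq> (\<lambda>_. 0)"
  then have "A_supp a \<noteq> {}" by (auto simp: A_supp_def)
  then obtain E where E: "E \<in> A_supp a" and min: "\<And>F. F \<in> A_supp a \<Longrightarrow> F \<subseteq> E \<Longrightarrow> E = F"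
    using finite_has_minimal[of "A_supp a"] c by (auto simp: A_carrier_def)
  have "a F * Q F (\<lambda>h. h \<in> E) = (if F = E then a F else 0)" if F: "F \<in> A_supp a" for F
  proof -
    have "finite F" using F c by (simp add: A_carrier_def)
    then have "a F * Q F (\<lambda>h. h \<in> E) = (if F \<subseteq> E then a F else 0)"
      by (simp add: Q_finite subset_eq)
    moreover have "F \<subseteq> E \<longleftrightarrow> F = E" using min[OF F] by auto
    ultimately show ?thesis by simp
  qed
  then have "Psi a (\<lambda>h. h \<in> E) = (\<Sum>F\<in>A_supp a. if F = E then a F else 0)"
    unfolding Psi_def by (rule sum.cong[OF refl])
  also have "\<dots> = a E" using E c by (simp add: A_carrier_def)
  finally show False using z E by (simp add: A_supp_def)
qed

lemma inj_on_Psi: "inj_on Psi A_carrier"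
proof (rule inj_onI)
  fix a b assume a: "a \<in> A_carrier" and b: "b \<in> A_carrier" and ab: "Psi a = Psi b"
  have "(\<lambda>E. a E - b E) \<in> A_carrier"
    using A_carrier_pointwise[OF a b, of "(-)"] by simp
  moreover have "Psi (\<lambda>E. a E - b E) = (\<lambda>_. 0)"
  proof
    fix x
    have "finite (A_supp a)" "finite (A_supp b)" using a b by (simp_all add: A_carrier_def)
    then show "Psi (\<lambda>E. a E - b E) x = 0" using ab by (simp add: Psi_diff)
  qed
  ultimately have "(\<lambda>E. a E - b E) = (\<lambda>_. 0)" by (rule Psi_eq_zero_imp)
  then show "a = b" by (simp add: fun_eq_iff)
qed

lemma A_supp_alpha: "A_supp (alpha g a) = (\<lambda>E. (+) g ` E) ` A_supp a"
proof
  show "A_supp (alpha g a) \<subseteq> (\<lambda>E. (+) g ` E) ` A_supp a"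
  proof
    fix F assume "F \<in> A_supp (alpha g a)"
    then have "(\<lambda>h. - g + h) ` F \<in> A_supp a" by (simp add: A_supp_def alpha_def)
    moreover have "F = (+) g ` ((\<lambda>h. - g + h) ` F)" by (simp add: image_image)
    ultimately show "F \<in> (\<lambda>E. (+) g ` E) ` A_supp a" by blast
  qed
qed (auto simp: A_supp_def alpha_def image_image)

lemma alpha_D: assumes "a \<in> D (- g)" shows "alpha g a \<in> D g"
proof -
  have "finite F \<and> 0 \<in> F \<and> g \<in> F" if F: "F \<in> A_supp (alpha g a)" for F
  proof -
    obtain E where E: "E \<in> A_supp a" "F = (+) g ` E" using F unfolding A_supp_alpha by blast
    then have "finite E" "0 \<in> E" "- g \<in> E" using assms by (auto simp: D_def A_carrier_def)
    then have "g + - g \<in> F" "g + 0 \<in> F" using E(2) by blast+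
    then show ?thesis using E \<open>finite E\<close> by simp
  qed
  moreover have "finite (A_supp (alpha g a))"
    using assms by (simp add: A_supp_alpha D_def A_carrier_def)
  ultimately show ?thesis by (simp add: D_def A_carrier_def)
qed

lemma Q_translate: "Q ((+) g ` E) x = Q E (phi (- g) x)"
  unfolding Q_def phi_def by (simp add: prod.reindex inj_on_def)

lemma Psi_alpha: "Psi (alpha g a) x = Psi a (phi (- g) x)"
proof -
  have "inj_on (\<lambda>E. (+) g ` E) (A_supp a)"
    by (rule inj_on_inverseI[where g="\<lambda>E. (\<lambda>h. - g + h) ` E"]) (simp add: image_image)
  then show ?thesis
    unfolding Psi_def A_supp_alpha
    by (simp add: sum.reindex alpha_def image_image Q_translate)
qed

lemma phi_fun_Psi:
  assumes "a \<in> D (- g)" shows "phi_fun g (Psi a) = Psi (alpha g a)"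
  using Psi_outside_Yg[OF alpha_D[OF assms]] by (auto simp: phi_fun_def Psi_alpha)

lemma partial_action_phi: "is_partial_action (Y_eps :: ('g::ab_group_add \<Rightarrow> bool) set) Yg phi"
proof -
  have phi_add: "phi g (phi h x) = phi (g + h) x" for g h :: 'g and x
    unfolding phi_def by (simp add: algebra_simps)
  have bij: "bij_betw (phi g) (Yg (- g)) (Yg g)" for g :: 'g
    by (rule bij_betw_byWitness[where f'="phi (- g)"])
       (auto simp: phi_def Yg_def Y_eps_def)
  have "Yg g \<inter> Yg (g + h) \<subseteq> phi g ` (Yg (- g) \<inter> Yg h)" for g h :: 'g
  proof
    fix y assume "y \<in> Yg g \<inter> Yg (g + h)"
    then have "phi (- g) y \<in> Yg (- g) \<inter> Yg h" by (simp add: phi_def Yg_def Y_eps_def)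
    moreover have "y = phi g (phi (- g) y)" by (simp add: phi_def)
    ultimately show "y \<in> phi g ` (Yg (- g) \<inter> Yg h)" by blast
  qed
  then have "phi g ` (Yg (- g) \<inter> Yg h) = Yg g \<inter> Yg (g + h)" for g h :: 'g
    by (auto simp: phi_def Yg_def Y_eps_def)
  with bij phi_add show ?thesis
    unfolding is_partial_action_def by (auto simp: Yg_def Y_eps_def phi_def)
qed

definition cylinder :: "'a set \<Rightarrow> ('a \<Rightarrow> bool) \<Rightarrow> ('a \<Rightarrow> bool) set" where
  "cylinder F x = {y. \<forall>h\<in>F. y h = x h}"

lemma self_in_cylinder [simp]: "x \<in> cylinder F x"
  by (simp add: cylinder_def)

lemma open_cylinder: "finite F \<Longrightarrow> open (cylinder F x)"
  using product_topology_basis'[where I=F and x=id and U="\<lambda>h. {x h}"]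
  by (simp add: cylinder_def open_discrete)

lemma open_contains_cylinder:
  assumes "open U" "x \<in> U"
  shows "\<exists>F. finite F \<and> cylinder F x \<subseteq> U"
proof -
  have "openin (product_topology (\<lambda>_. euclidean) UNIV) U"
    using assms(1) by (simp add: open_fun_def)
  from product_topology_open_contains_basis[OF this assms(2)] obtain X where
    X: "x \<in> (\<Pi>\<^sub>E i\<in>UNIV. X i)" "finite {i. X i \<noteq> UNIV}" "(\<Pi>\<^sub>E i\<in>UNIV. X i) \<subseteq> U"
    by auto
  have "cylinder {i. X i \<noteq> UNIV} x \<subseteq> (\<Pi>\<^sub>E i\<in>UNIV. X i)"
  proof
    fix y assume "y \<in> cylinder {i. X i \<noteq> UNIV} x"
    then have "y i \<in> X i" for i
      using X(1) by (cases "X i = UNIV") (auto simp: cylinder_def PiE_iff)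
    then show "y \<in> (\<Pi>\<^sub>E i\<in>UNIV. X i)" by (simp add: PiE_iff)
  qed
  with X show ?thesis by blast
qed

lemma compact_Yg: "compact (Yg g)"
proof -
  define S where "S = (\<lambda>i. if i = 0 \<or> i = g then {True} else (UNIV :: bool set))"
  have Yg: "Yg g = (\<Pi>\<^sub>E i\<in>UNIV. S i)"
    by (auto simp: Yg_def Y_eps_def S_def PiE_iff split: if_splits)
  have "compactin euclidean (S i)" for i
    unfolding compactin_euclidean_iff by (rule finite_imp_compact) simp
  then have "compactin (product_topology (\<lambda>_. euclidean) UNIV) (\<Pi>\<^sub>E i\<in>UNIV. S i)"
    unfolding compactin_PiE by blast
  then show ?thesis
    unfolding Yg euclidean_product_topology compactin_euclidean_iff .
qed

lemma C_R_if_finite_dependence: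
  assumes "compact X" "finite F" "\<And>x. x \<notin> X \<Longrightarrow> f x = 0"
    and "\<And>x y. y \<in> cylinder F x \<Longrightarrow> f y = f x"
  shows "f \<in> C_R X"
proof -
  have "\<forall>x\<in>X. \<exists>U. open U \<and> x \<in> U \<and> (\<forall>y\<in>U \<inter> X. f y = f x)"
  proof
    fix x
    show "\<exists>U. open U \<and> x \<in> U \<and> (\<forall>y\<in>U \<inter> X. f y = f x)"
      by (intro exI[of _ "cylinder F x"] conjI open_cylinder assms(2) self_in_cylinder)
         (simp add: assms(4))
  qed
  moreover have "\<exists>K. compact K \<and> K \<subseteq> X \<and> {x \<in> X. f x \<noteq> 0} \<subseteq> K"
    using assms(1) by (intro exI[of _ X]) auto
  moreover have "\<forall>x. x \<notin> X \<longrightarrow> f x = 0" using assms(3) by simp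
  ultimately show ?thesis unfolding C_R_def by (intro CollectI conjI)
qed

text \<open>Compactness of the support makes finitely many of the local cylinders suffice.\<close>
lemma C_R_finite_dependence:
  assumes "f \<in> C_R X"
  shows "\<exists>F. finite F \<and> (\<forall>x\<in>X. \<forall>y\<in>X. y \<in> cylinder F x \<longrightarrow> f y = f x)"
proof -
  from assms obtain K where K: "compact K" "K \<subseteq> X" "\<And>x. x \<in> X \<Longrightarrow> f x \<noteq> 0 \<Longrightarrow> x \<in> K"
    unfolding C_R_def by blast
  from assms have loc: "\<forall>x\<in>X. \<exists>U. open U \<and> x \<in> U \<and> (\<forall>y\<in>U \<inter> X. f y = f x)"
    by (simp add: C_R_def)
  have "\<exists>F. finite F \<and> (\<forall>y\<in>X. y \<in> cylinder F x \<longrightarrow> f y = f x)" if "x \<in> K" for x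
  proof -
    obtain U where U: "open U" "x \<in> U" "\<forall>y\<in>U \<inter> X. f y = f x"
      using loc \<open>x \<in> K\<close> K(2) by blast
    with open_contains_cylinder[OF U(1,2)] show ?thesis by blast
  qed
  then obtain Fx where Fx: "\<And>x. x \<in> K \<Longrightarrow> finite (Fx x)"
    "\<And>x y. x \<in> K \<Longrightarrow> y \<in> X \<Longrightarrow> y \<in> cylinder (Fx x) x \<Longrightarrow> f y = f x"
    using bchoice[of K "\<lambda>x F. finite F \<and> (\<forall>y\<in>X. y \<in> cylinder F x \<longrightarrow> f y = f x)"] by blast
  obtain C where C: "C \<subseteq> K" "finite C" "K \<subseteq> (\<Union>x\<in>C. cylinder (Fx x) x)"
    by (rule compactE_image[OF K(1), of K "\<lambda>x. cylinder (Fx x) x"])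
       (auto intro: open_cylinder Fx(1))
  define F where "F = (\<Union>x\<in>C. Fx x)"
  have "f y = f x" if xy: "x \<in> X" "y \<in> X" "y \<in> cylinder F x" for x y
  proof (cases "\<exists>c\<in>C. x \<in> cylinder (Fx c) c")
    case True
    then obtain c where c: "c \<in> C" "x \<in> cylinder (Fx c) c" by blast
    then have "y \<in> cylinder (Fx c) c"
      using xy(3) by (auto simp: F_def cylinder_def)
    moreover have "c \<in> K" using c C(1) by blast
    ultimately show ?thesis using Fx(2) c(2) xy(1,2) by metis
  next
    case False
    then have "x \<notin> K" using C(3) by blast
    moreover have "y \<notin> K"
    proof
      assume "y \<in> K"
      then obtain c where "c \<in> C" "y \<in> cylinder (Fx c) c" using C(3) by blast
      with xy(3) False show False by (auto simp: F_def cylinder_def)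
    qed
    ultimately show ?thesis using K(3) xy(1,2) by (cases "f x = 0") auto
  qed
  moreover have "finite F" using C Fx(1) by (auto simp: F_def)
  ultimately show ?thesis by blast
qed

lemma Psi_cylinder:
  assumes "a \<in> A_carrier" "y \<in> cylinder (\<Union>(A_supp a)) x"
  shows "Psi a y = Psi a x"
  unfolding Psi_def
proof (rule sum.cong[OF refl])
  fix E assume E: "E \<in> A_supp a"
  then have "finite E" using assms(1) by (simp add: A_carrier_def)
  moreover have "\<forall>h\<in>E. y h = x h" using assms(2) E by (auto simp: cylinder_def)
  ultimately show "a E * Q E y = a E * Q E x" by (simp add: Q_finite)
qed

lemma Psi_in_C_R_Yg:
  assumes "a \<in> D g" shows "Psi a \<in> C_R (Yg g)"
proof (rule C_R_if_finite_dependence[OF compact_Yg])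
  have c: "a \<in> A_carrier" using assms by (simp add: D_def)
  then show "finite (\<Union>(A_supp a))" by (auto simp: A_carrier_def)
  show "Psi a y = Psi a x" if "y \<in> cylinder (\<Union>(A_supp a)) x" for x y
    using Psi_cylinder[OF c that] .
qed (rule Psi_outside_Yg[OF assms])

text \<open>Induction on the set of coordinates: splitting along the value of one coordinate h gives
  f y = [y h] f (y(h := True)) + (1 - [y h]) f (y(h := False)).\<close>
lemma Psi_onto_finite_dependence:
  fixes f :: "('g \<Rightarrow> bool) \<Rightarrow> 'r::comm_ring_1"
  assumes "finite F" and "\<And>x y. y \<in> cylinder F x \<Longrightarrow> f y = f x"
  shows "\<exists>a\<in>A_carrier. Psi a = f"
  using assms
proof (induction F arbitrary: f rule: finite_induct)
  case empty
  define a where "a = (\<lambda>E :: 'g set. if E = {} then f (\<lambda>_. True) else 0)"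
  have supp: "A_supp a \<subseteq> {{}}" by (auto simp: A_supp_def a_def)
  then have "a \<in> A_carrier" by (auto simp: A_carrier_def finite_subset)
  moreover have "Psi a x = f x" for x
    using Psi_superset[OF _ supp, of x] empty.prems[of "\<lambda>_. True" x]
    by (simp add: a_def Q_def cylinder_def)
  ultimately show ?case by auto
next
  case (insert h F)
  have "y(h := b) \<in> cylinder (insert h F) (x(h := b))" if "y \<in> cylinder F x" for x y b
    using that by (simp add: cylinder_def)
  then obtain a1 a0 where a1: "a1 \<in> A_carrier" "Psi a1 = (\<lambda>y. f (y(h := True)))"
    and a0: "a0 \<in> A_carrier" "Psi a0 = (\<lambda>y. f (y(h := False)))"
    using insert.IH[of "\<lambda>y. f (y(h := True))"] insert.IH[of "\<lambda>y. f (y(h := False))"]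
      insert.prems by meson
  let ?p = "P {h}"
  have p: "?p \<in> A_carrier" by (simp add: A_carrier_def A_supp_def P_def)
  define a where "a = (\<lambda>E. (A_mult ?p a1 E + a0 E) - A_mult ?p a0 E)"
  have m1: "A_mult ?p a1 \<in> A_carrier" and m0: "A_mult ?p a0 \<in> A_carrier"
    using A_mult_carrier p a1(1) a0(1) by blast+
  have s: "(\<lambda>E. A_mult ?p a1 E + a0 E) \<in> A_carrier"
    using A_carrier_pointwise[OF m1 a0(1), of "(+)"] by simp
  have "a \<in> A_carrier"
    using A_carrier_pointwise[OF s m0, of "(-)"] by (simp add: a_def)
  moreover have "Psi a y = f y" for y
  proof -
    have "Psi a y = Psi (A_mult ?p a1) y + Psi a0 y - Psi (A_mult ?p a0) y"
      using s m1 m0 a0(1) by (simp add: a_def Psi_diff Psi_add A_carrier_def)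
    also have "\<dots> = Q {h} y * f (y(h := True)) + f (y(h := False)) - Q {h} y * f (y(h := False))"
      by (simp add: Psi_A_mult p a1 a0 Psi_P)
    also have "\<dots> = f y"
      by (cases "y h") (simp_all add: Q_finite fun_upd_idem)
    finally show ?thesis .
  qed
  ultimately show ?case by auto
qed

text \<open>Adding the coordinates 0 and g, which decide membership in Yg g, makes the finite dependence
  hold on all of Y; multiplying the preimage by P {0, g} moves it into D g.\<close>
lemma Psi_D_onto_C_R:
  fixes f :: "('g::ab_group_add \<Rightarrow> bool) \<Rightarrow> 'r::comm_ring_1"
  assumes f: "f \<in> C_R (Yg g)" shows "\<exists>a\<in>D g. Psi a = f"
proof -
  obtain F where F: "finite F" "\<And>x y. x \<in> Yg g \<Longrightarrow> y \<in> Yg g \<Longrightarrow> y \<in> cylinder F x \<Longrightarrow> f y = f x"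
    using C_R_finite_dependence[OF f] by blast
  have out: "f x = 0" if "x \<notin> Yg g" for x
    using f that by (simp add: C_R_def)
  have "f y = f x" if "y \<in> cylinder (insert 0 (insert g F)) x" for x y
  proof -
    have "x \<in> Yg g \<longleftrightarrow> y \<in> Yg g" "y \<in> cylinder F x"
      using that by (auto simp: cylinder_def Yg_def Y_eps_def)
    then show ?thesis using F(2) out by metis
  qed
  then obtain a where a: "a \<in> A_carrier" "Psi a = f"
    using Psi_onto_finite_dependence[of "insert 0 (insert g F)" f] F(1) by blast
  have p: "P {0, g} \<in> (D g :: ('g set \<Rightarrow> 'r) set)" by (simp add: D_def A_carrier_def A_supp_def P_def)
  have "Psi (A_mult (P {0, g}) a) x = f x" for x
  proof -
    have "Psi (A_mult (P {0, g}) a) x = Q {0, g} x * f x"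
      using p a by (simp add: Psi_A_mult D_def Psi_P)
    also have "\<dots> = f x" using out[of x] by (auto simp: Q_finite Yg_def Y_eps_def)
    finally show ?thesis .
  qed
  with A_mult_D[OF p a(1)] show ?thesis by blast
qed

lemma bij_betw_Psi_D_C_R: "bij_betw Psi (D g) (C_R (Yg g))"
proof -
  have "inj_on Psi (D g)"
    by (rule inj_on_subset[OF inj_on_Psi]) (auto simp: D_def)
  moreover have "Psi ` D g = C_R (Yg g)"
    using Psi_in_C_R_Yg Psi_D_onto_C_R by blast
  ultimately show ?thesis by (simp add: bij_betw_def)
qed

lemma bij_betw_cp_carrier:
  assumes bij: "\<And>g. bij_betw \<psi> (B g) (C g)"
    and zero: "\<And>g. (\<lambda>_. 0) \<in> B g" "\<psi> (\<lambda>_. 0) = (\<lambda>_. 0)"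
  shows "bij_betw (\<lambda>u g. \<psi> (u g)) (cp_carrier B) (cp_carrier C)"
proof -
  have supp: "{g. \<psi> (u g) \<noteq> (\<lambda>_. 0)} = {g. u g \<noteq> (\<lambda>_. 0)}" if "\<And>g. u g \<in> B g" for u
  proof -
    have "\<psi> (u g) = \<psi> (\<lambda>_. 0) \<longleftrightarrow> u g = (\<lambda>_. 0)" for g
      using inj_on_eq_iff[OF bij_betw_imp_inj_on[OF bij[of g]] that[of g] zero(1)[of g]] .
    then show ?thesis using zero(2) by auto
  qed
  have "inj_on (\<lambda>u g. \<psi> (u g)) (cp_carrier B)"
  proof (rule inj_onI, rule ext)
    fix u v g assume "u \<in> cp_carrier B" "v \<in> cp_carrier B" "(\<lambda>g. \<psi> (u g)) = (\<lambda>g. \<psi> (v g))"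
    then have "u g \<in> B g" "v g \<in> B g" "\<psi> (u g) = \<psi> (v g)"
      by (auto simp: cp_carrier_def fun_eq_iff)
    then show "u g = v g"
      using inj_on_eq_iff[OF bij_betw_imp_inj_on[OF bij[of g]]] by blast
  qed
  moreover have "(\<lambda>g. \<psi> (u g)) \<in> cp_carrier C" if "u \<in> cp_carrier B" for u
  proof -
    have "u g \<in> B g" for g using that by (simp add: cp_carrier_def)
    with supp[of u] that show ?thesis
      by (simp add: cp_carrier_def bij_betw_apply[OF bij])
  qed
  then have "(\<lambda>u g. \<psi> (u g)) ` cp_carrier B \<subseteq> cp_carrier C" by blast
  moreover have "cp_carrier C \<subseteq> (\<lambda>u g. \<psi> (u g)) ` cp_carrier B"
  proof
    fix w assume w: "w \<in> cp_carrier C"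
    define u where "u g = inv_into (B g) \<psi> (w g)" for g
    have u: "u g \<in> B g" "\<psi> (u g) = w g" for g
      using w bij[of g] by (auto simp: u_def cp_carrier_def bij_betw_def inv_into_into f_inv_into_f)
    then have "u \<in> cp_carrier B"
      using supp[of u] w by (simp add: cp_carrier_def)
    moreover have "w = (\<lambda>g. \<psi> (u g))" using u by simp
    ultimately show "w \<in> (\<lambda>u g. \<psi> (u g)) ` cp_carrier B" by blast
  qed
  ultimately show ?thesis by (auto simp: bij_betw_def)
qed

lemma Psi_cp_mult:
  fixes u v :: "'g::ab_group_add \<Rightarrow> 'g set \<Rightarrow> 'r::comm_ring_1"
  assumes u: "u \<in> cp_carrier D" and v: "v \<in> cp_carrier D"
  shows "(\<lambda>k. Psi (cp_mult A_mult alpha u v k))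
    = cp_mult fun_mult phi_fun (\<lambda>g. Psi (u g)) (\<lambda>g. Psi (v g))"
proof (rule ext)+
  fix k x
  let ?S = "{g. u g \<noteq> (\<lambda>_. 0)}"
  have uD: "u g \<in> D g" and vD: "v g \<in> D g" for g
    using u v by (auto simp: cp_carrier_def)
  have S: "finite ?S" using u by (simp add: cp_carrier_def)
  have supp: "{g. Psi (u g) \<noteq> (\<lambda>_. 0)} = ?S"
    using Psi_eq_zero_imp uD by (auto simp: D_def Psi_zero)
  define m where "m g = A_mult (alpha (- g) (u g)) (v (- g + k))" for g
  have uD': "u g \<in> D (- (- g))" for g using uD by simp
  have mD: "m g \<in> D (- g)" for g
    unfolding m_def using alpha_D[OF uD'] vD by (intro A_mult_D) (auto simp: D_def)
  have "Psi (alpha g (m g)) x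
      = phi_fun g (fun_mult (phi_fun (- g) (Psi (u g))) (Psi (v (- g + k)))) x" for g
  proof -
    have "Psi (m g) = fun_mult (Psi (alpha (- g) (u g))) (Psi (v (- g + k)))"
      using alpha_D[OF uD'] vD by (auto simp: m_def fun_mult_def Psi_A_mult D_def)
    then show ?thesis
      using phi_fun_Psi[OF mD, symmetric] phi_fun_Psi[OF uD'] by simp
  qed
  moreover have "finite (A_supp (alpha g (m g)))" for g
    using alpha_D[OF mD] by (simp add: D_def A_carrier_def)
  ultimately have "Psi (\<lambda>E. \<Sum>g\<in>?S. alpha g (m g) E) x
      = (\<Sum>g\<in>?S. phi_fun g (fun_mult (phi_fun (- g) (Psi (u g))) (Psi (v (- g + k)))) x)"
    by (simp add: Psi_sum[OF S])
  then show "Psi (cp_mult A_mult alpha u v k) x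
      = cp_mult fun_mult phi_fun (\<lambda>g. Psi (u g)) (\<lambda>g. Psi (v g)) k x"
    unfolding cp_mult_def supp m_def by simp
qed

lemma Psi_cp_add:
  fixes u v :: "'g::ab_group_add \<Rightarrow> 'g set \<Rightarrow> 'r::comm_ring_1"
  assumes "u \<in> cp_carrier D" "v \<in> cp_carrier D"
  shows "(\<lambda>g. Psi (cp_add u v g)) = cp_add (\<lambda>g. Psi (u g)) (\<lambda>g. Psi (v g))"
  using assms by (simp add: cp_carrier_def D_def A_carrier_def cp_add_def fun_eq_iff Psi_add)

lemma Psi_cp_smul:
  fixes u :: "'g::ab_group_add \<Rightarrow> 'g set \<Rightarrow> 'r::comm_ring_1"
  assumes "u \<in> cp_carrier D"
  shows "(\<lambda>g. Psi (cp_smul r u g)) = cp_smul r (\<lambda>g. Psi (u g))"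
  using assms by (simp add: cp_carrier_def D_def A_carrier_def cp_smul_def fun_eq_iff Psi_smul)

lemma cp_algebra_iso_Psi:
  "cp_algebra_iso (cp_carrier (D :: 'g::ab_group_add \<Rightarrow> ('g set \<Rightarrow> 'r::comm_ring_1) set))
     (cp_mult A_mult alpha) (cp_carrier (\<lambda>g. C_R (Yg g))) (cp_mult fun_mult phi_fun)
     (\<lambda>u g. Psi (u g))"
proof -
  have "(\<lambda>_. 0) \<in> (D g :: ('g set \<Rightarrow> 'r) set)" for g
    by (simp add: D_def A_carrier_def A_supp_def)
  then have "bij_betw (\<lambda>u g. Psi (u g)) (cp_carrier (D :: 'g \<Rightarrow> ('g set \<Rightarrow> 'r) set))
      (cp_carrier (\<lambda>g. C_R (Yg g)))"
    by (rule bij_betw_cp_carrier[OF bij_betw_Psi_D_C_R _ Psi_zero])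
  then show ?thesis
    unfolding cp_algebra_iso_def using Psi_cp_add Psi_cp_smul Psi_cp_mult by blast
qed

theorem mainTheorem13:
  fixes G_ty :: "'g::ab_group_add itself" and R_ty :: "'r::comm_ring_1 itself"
  shows "is_partial_action (Y_eps :: ('g \<Rightarrow> bool) set) Yg phi
    \<and> (\<forall>g::'g. \<forall>a \<in> (D (- g) :: ('g set \<Rightarrow> 'r) set). phi_fun g (Psi a) = Psi (alpha g a))
    \<and> (\<exists>f. cp_algebra_iso
            (cp_carrier (D :: 'g \<Rightarrow> ('g set \<Rightarrow> 'r) set)) (cp_mult A_mult alpha)
            (cp_carrier (\<lambda>g::'g. (C_R (Yg g) :: (('g \<Rightarrow> bool) \<Rightarrow> 'r) set))) (cp_mult fun_mult phi_fun)
            f)"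
  using partial_action_phi phi_fun_Psi cp_algebra_iso_Psi by blast

end
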